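(* Let $m$, $E$ and the chaos notation be as in the context, let $f\in L^2_{\mathbb{R}}(\mathcal{H},\mathcal{B},m)$ and let $k$ be a positive integer such that the $k$-linear form $\mathcal{B}_{f_k}$ is bounded. Then the series $\sum_{(i_1,\dots,i_k)\in(\mathbb{Z}^* )^k}|\alpha^{(k)}_{i_1,\dots,i_k}|^2\sigma_{i_1}^2\cdots\sigma_{i_{k-1}}^2$ converges and $$\sum_{(i_1,\dots,i_k)\in(\mathbb{Z}^* )^k}\big|\alpha^{(k)}_{i_1,\dots,i_k}\big|^2\sigma_{i_1}^2\cdots\sigma_{i_{k-1}}^2\le\|\mathcal{B}_{f_k}\|^2\,\|E\|_2^{2(k-1)}.$$
   Context: $\mathcal{H}$ complex separable infinite-dimensional Hilbert space (inner product linear in second variable). $T$ bounded with a $\mu$-spanning $\mathbb{T}$-eigenvector field $E$ (bounded $E:\mathbb{T}\to\mathcal{H}$, $TE(\lambda)=\lambda E(\lambda)$, dense span of $\{E(\lambda):\lambda\in A\}$ whenever $\mu(A)=1$, $\mu$ normalized Lebesgue measure on the unit circle $\mathbb{T}$); $\|E\|_2^2=\int\|E(\lambda)\|^2d\mu$. $R$: $\langle Rx,y\rangle=\int\langle x,E(\lambda)\rangle\overline{\langle y,E(\lambda)\rangle}d\mu$; $m$ the Gaussian measure with covariance $R$. $(e_j)_{j\ge1}$ orthonormal eigenbasis of $R$, $Re_j=2\sigma_j^2e_j$; $\mathbb{Z}^*=\mathbb{Z}\setminus\{0\}$, $\mathfrak{e}_\ell=e_\ell$, $\mathfrak{e}_{-\ell}=ie_\ell$,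 $\sigma_{-\ell}=\sigma_\ell$. $L^2_{\mathbb{R}}$ real-valued part of $L^2(m)$; $\mathcal{G}$ closed span of $\mathfrak{Re}\langle\mathfrak{e}_k,\cdot\rangle$; $\mathcal{G}^k$ span of $k$-fold products; $:h:=h-P_kh$, $P_k$ projection onto closed span of $\mathcal{G}^0,\dots,\mathcal{G}^{k-1}$; $:\mathcal{G}^k:$ closure of Wick transforms; $f_k$ projection of $f$ onto $:\mathcal{G}^k:$. $\alpha^{(k)}_{i_1,\dots,i_k}=\langle f,:\mathfrak{Re}\langle\mathfrak{e}_{i_1},\cdot\rangle\cdots\mathfrak{Re}\langle\mathfrak{e}_{i_k},\cdot\rangle:\rangle_{L^2(m)}/(k!\sigma_{i_1}^2\cdots\sigma_{i_k}^2)$ (the symmetric coefficients with $f_k=\sum_{(\mathbb{Z}^* )^k}\alpha^{(k)}_{i_1,\dots,i_k}:\mathfrak{Re}\langle\mathfrak{e}_{i_1},\cdot\rangle\cdots\mathfrak{Re}\langle\mathfrak{e}_{i_k},\cdot\rangle:$), and $\mathcal{B}_{f_k}(x^{(1)},\dots,x^{(k)})=\sum_{(\mathbb{Z}^* )^k}\alpha^{(k)}_{i_1,\dots,i_k}x^{(1)}_{i_1}\cdots x^{(k)}_{i_k}$ on $\ell_2(\mathbb{Z}^*,\mathbb{R})^k$; bounded means well defined with $|\mathcal{B}_{f_k}(x^{(1)},\dots)|\le C\prod\|x^{(j)}\|_2$, $\|\mathcal{B}_{f_k}\|$ the sup over unit vectors. *)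

theory Defs
  imports "HOL-Probability.Probability"
begin

section \<open>The Hilbert space: a concrete model of a complex separable infinite-dimensional Hilbert space\<close>

type_synonym hvec = "nat \<Rightarrow> complex"

definition l2H :: "hvec set" where
  "l2H = {x. summable (\<lambda>n. (cmod (x n))\<^sup>2)}"

definition hinner :: "hvec \<Rightarrow> hvec \<Rightarrow> complex" where
  "hinner x y = (\<Sum>n. cnj (x n) * y n)"

definition hnorm :: "hvec \<Rightarrow> real" where
  "hnorm x = sqrt (\<Sum>n. (cmod (x n))\<^sup>2)"

definition hscale :: "complex \<Rightarrow> hvec \<Rightarrow> hvec" where
  "hscale c x = (\<lambda>n. c * x n)"

definition bounded_op :: "(hvec \<Rightarrow> hvec) \<Rightarrow> bool" where
  "bounded_op T \<longleftrightarrow>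
     (\<forall>x\<in>l2H. T x \<in> l2H) \<and>
     (\<forall>x\<in>l2H. \<forall>y\<in>l2H. \<forall>a b. T (\<lambda>n. a * x n + b * y n) = (\<lambda>n. a * T x n + b * T y n)) \<and>
     (\<exists>C. \<forall>x\<in>l2H. hnorm (T x) \<le> C * hnorm x)"

definition circle_measure :: "complex measure" where
  "circle_measure =
     distr (uniform_measure lborel {0..<2*pi}) (restrict_space borel (sphere (0::complex) 1)) cis"

definition spanning_field :: "(hvec \<Rightarrow> hvec) \<Rightarrow> (complex \<Rightarrow> hvec) \<Rightarrow> bool" where
  "spanning_field T E \<longleftrightarrow>
     (\<forall>l\<in>sphere 0 1. E l \<in> l2H \<and> T (E l) = hscale l (E l)) \<and>
     (\<exists>M. \<forall>l\<in>sphere 0 1. hnorm (E l) \<le> M) \<and>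
     (\<forall>x\<in>l2H. (\<lambda>l. hinner x (E l)) \<in> borel_measurable circle_measure) \<and>
     (\<forall>A\<in>sets circle_measure. measure circle_measure A = 1 \<longrightarrow>
        (\<forall>x\<in>l2H. \<forall>\<epsilon>>0. \<exists>F c. finite F \<and> F \<subseteq> A \<and>
            hnorm (\<lambda>n. x n - (\<Sum>l\<in>F. c l * E l n)) < \<epsilon>))"

definition E_L2norm_sq :: "(complex \<Rightarrow> hvec) \<Rightarrow> real" where
  "E_L2norm_sq E = (\<integral>l. (hnorm (E l))\<^sup>2 \<partial>circle_measure)"

definition is_R_of :: "(complex \<Rightarrow> hvec) \<Rightarrow> (hvec \<Rightarrow> hvec) \<Rightarrow> bool" where
  "is_R_of E R \<longleftrightarrow> (\<forall>x\<in>l2H. R x \<in> l2H) \<and>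
     (\<forall>x\<in>l2H. \<forall>y\<in>l2H. hinner (R x) y =
        (\<integral>l. hinner x (E l) * cnj (hinner y (E l)) \<partial>circle_measure))"

definition is_eigenbasis :: "(hvec \<Rightarrow> hvec) \<Rightarrow> (nat \<Rightarrow> hvec) \<Rightarrow> (nat \<Rightarrow> real) \<Rightarrow> bool" where
  "is_eigenbasis R e \<sigma> \<longleftrightarrow>
     (\<forall>j\<ge>1. e j \<in> l2H) \<and>
     (\<forall>j\<ge>1. \<forall>l\<ge>1. hinner (e j) (e l) = (if j = l then 1 else 0)) \<and>
     (\<forall>x\<in>l2H. (\<forall>j\<ge>1. hinner (e j) x = 0) \<longrightarrow> x = (\<lambda>_. 0)) \<and>
     (\<forall>j\<ge>1. R (e j) = hscale (complex_of_real (2 * (\<sigma> j)\<^sup>2)) (e j))"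

definition frake :: "(nat \<Rightarrow> hvec) \<Rightarrow> int \<Rightarrow> hvec" where
  "frake e l = (if l > 0 then e (nat l) else hscale \<i> (e (nat (- l))))"

definition sigZ :: "(nat \<Rightarrow> real) \<Rightarrow> int \<Rightarrow> real" where
  "sigZ \<sigma> l = \<sigma> (nat \<bar>l\<bar>)"

definition H_sets :: "hvec set set" where
  "H_sets = sigma_sets l2H {{x \<in> l2H. x n \<in> U} | n U. U \<in> sets (borel :: complex measure)}"

text \<open>Centered (complex symmetric) Gaussian measure with covariance R:
  \<open>\<integral> exp(i Re\<langle>x,z\<rangle>) dm(z) = exp(-\<langle>Rx,x\<rangle>/4)\<close>, i.e. \<open>\<integral>|\<langle>x,z\<rangle>|^2 dm = \<langle>Rx,x\<rangle>\<close>.\<close>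
definition gaussian_cov :: "hvec measure \<Rightarrow> (hvec \<Rightarrow> hvec) \<Rightarrow> bool" where
  "gaussian_cov m R \<longleftrightarrow> prob_space m \<and> space m = l2H \<and> sets m = H_sets \<and>
     (\<forall>x\<in>l2H. (\<integral>z. exp (\<i> * complex_of_real (Re (hinner x z))) \<partial>m)
                = complex_of_real (exp (- Re (hinner (R x) x) / 4)))"

definition L2R :: "hvec measure \<Rightarrow> (hvec \<Rightarrow> real) set" where
  "L2R m = {h. h \<in> borel_measurable m \<and> integrable m (\<lambda>z. (h z)\<^sup>2)}"

definition L2_closure :: "hvec measure \<Rightarrow> (hvec \<Rightarrow> real) set \<Rightarrow> (hvec \<Rightarrow> real) set" where
  "L2_closure m S = {h \<in> L2R m. \<forall>\<epsilon>>0. \<exists>v\<in>S. (\<integral>z. (h z - v z)\<^sup>2 \<partial>m) < \<epsilon>}"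

definition lin_span :: "(hvec \<Rightarrow> real) set \<Rightarrow> (hvec \<Rightarrow> real) set" where
  "lin_span S = {(\<lambda>z. \<Sum>i<n. c i * g i z) | (n::nat) (c::nat \<Rightarrow> real) g. \<forall>i<n. g i \<in> S}"

definition rfun :: "(nat \<Rightarrow> hvec) \<Rightarrow> int \<Rightarrow> hvec \<Rightarrow> real" where
  "rfun e l z = Re (hinner (frake e l) z)"

definition Gspace :: "hvec measure \<Rightarrow> (nat \<Rightarrow> hvec) \<Rightarrow> (hvec \<Rightarrow> real) set" where
  "Gspace m e = L2_closure m (lin_span {rfun e l | l. l \<noteq> 0})"

definition Gpow :: "hvec measure \<Rightarrow> (nat \<Rightarrow> hvec) \<Rightarrow> nat \<Rightarrow> (hvec \<Rightarrow> real) set" where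
  "Gpow m e j = lin_span {(\<lambda>z. \<Prod>i<j. g i z) | g. \<forall>i<j. g i \<in> Gspace m e}"

definition Vlow :: "hvec measure \<Rightarrow> (nat \<Rightarrow> hvec) \<Rightarrow> nat \<Rightarrow> (hvec \<Rightarrow> real) set" where
  "Vlow m e k = L2_closure m (lin_span (\<Union>j<k. Gpow m e j))"

text \<open>\<open>g = :h: = h - P_k h\<close>: characterised by \<open>h - g \<in> V\<close> and \<open>g \<perp> V\<close> (orthogonal projection).\<close>
definition is_wick :: "hvec measure \<Rightarrow> (nat \<Rightarrow> hvec) \<Rightarrow> nat \<Rightarrow> (hvec \<Rightarrow> real) \<Rightarrow> (hvec \<Rightarrow> real) \<Rightarrow> bool" where
  "is_wick m e k h g \<longleftrightarrow> g \<in> L2R m \<and> (\<lambda>z. h z - g z) \<in> Vlow m e k \<and>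
     (\<forall>v\<in>Vlow m e k. (\<integral>z. g z * v z \<partial>m) = 0)"

definition wick :: "hvec measure \<Rightarrow> (nat \<Rightarrow> hvec) \<Rightarrow> nat \<Rightarrow> (hvec \<Rightarrow> real) \<Rightarrow> (hvec \<Rightarrow> real)" where
  "wick m e k h = (SOME g. is_wick m e k h g)"

definition alpha :: "hvec measure \<Rightarrow> (nat \<Rightarrow> hvec) \<Rightarrow> (nat \<Rightarrow> real) \<Rightarrow> (hvec \<Rightarrow> real) \<Rightarrow> nat \<Rightarrow> int list \<Rightarrow> real" where
  "alpha m e \<sigma> f k is =
     (\<integral>z. f z * wick m e k (\<lambda>w. \<Prod>j<k. rfun e (is ! j) w) z \<partial>m)
       / (fact k * (\<Prod>j<k. (sigZ \<sigma> (is ! j))\<^sup>2))"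

definition Zstar_tuples :: "nat \<Rightarrow> int list set" where
  "Zstar_tuples k = {is. length is = k \<and> 0 \<notin> set is}"

text \<open>Finitely supported real sequences indexed by \<open>\<int>*\<close>.\<close>
definition fsv :: "(int \<Rightarrow> real) set" where
  "fsv = {x. x 0 = 0 \<and> finite {i. x i \<noteq> 0}}"

definition l2norm :: "(int \<Rightarrow> real) \<Rightarrow> real" where
  "l2norm x = sqrt (\<Sum>i\<in>{i. x i \<noteq> 0}. (x i)\<^sup>2)"

definition Bform :: "(int list \<Rightarrow> real) \<Rightarrow> nat \<Rightarrow> (nat \<Rightarrow> int \<Rightarrow> real) \<Rightarrow> real" where
  "Bform a k xs = (\<Sum>is\<in>{is. length is = k \<and> (\<forall>j<k. xs j (is ! j) \<noteq> 0)}.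
                      a is * (\<Prod>j<k. xs j (is ! j)))"

definition Bbounded :: "(int list \<Rightarrow> real) \<Rightarrow> nat \<Rightarrow> bool" where
  "Bbounded a k \<longleftrightarrow> (\<exists>C. \<forall>xs. (\<forall>j<k. xs j \<in> fsv) \<longrightarrow>
                         \<bar>Bform a k xs\<bar> \<le> C * (\<Prod>j<k. l2norm (xs j)))"

definition Bnorm :: "(int list \<Rightarrow> real) \<Rightarrow> nat \<Rightarrow> real" where
  "Bnorm a k = Sup {\<bar>Bform a k xs\<bar> | xs. \<forall>j<k. xs j \<in> fsv \<and> l2norm (xs j) = 1}"

end

theory Submission
  imports Defs
begin

text \<open>
  Fix all indices but the last, \<open>p = (i_1, \<dots>, i_{k-1})\<close>. Evaluating the form at the
  coordinate vectors of \<open>i_1, \<dots>, i_{k-1}\<close> and at the normalised row \<open>i \<mapsto> \<alpha>_{p,i}\<close> shows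
  \<open>\<Sum>_i \<alpha>_{p,i}^2 \<le> \<parallel>B_{f_k}\<parallel>^2\<close> for every row. Weighting the rows by
  \<open>\<sigma>_{i_1}^2 \<cdots> \<sigma>_{i_{k-1}}^2\<close> and summing over \<open>p\<close> therefore costs at most a factor
  \<open>(\<Sum>_{\<ell> \<in> \<int>*} \<sigma>_\<ell>^2)^{k-1}\<close>, and by Bessel's inequality
  \<open>\<Sum>_{\<ell> \<in> \<int>*} \<sigma>_\<ell>^2 = \<Sum>_j 2\<sigma>_j^2 = \<Sum>_j \<integral> |\<langle>e_j, E(\<lambda>)\<rangle>|^2 d\<mu> \<le> \<integral> \<parallel>E(\<lambda>)\<parallel>^2 d\<mu> = \<parallel>E\<parallel>_2^2\<close>.
\<close>

lemma sum_prod_nth_lists_length_eq: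
  fixes g :: "'a \<Rightarrow> 'b::comm_semiring_1"
  assumes "finite S"
  shows "(\<Sum>p\<in>{p. set p \<subseteq> S \<and> length p = n}. \<Prod>j<n. g (p ! j)) = (\<Sum>i\<in>S. g i) ^ n"
proof (induction n)
  case 0
  have "{p. set p \<subseteq> S \<and> length p = 0} = {[]}" by auto
  then show ?case by simp
next
  case (Suc n)
  have inj: "inj_on (\<lambda>(p, i). i # p) ({p. set p \<subseteq> S \<and> length p = n} \<times> S)"
    by (auto simp: inj_on_def)
  have "(\<Sum>p\<in>{p. set p \<subseteq> S \<and> length p = Suc n}. \<Prod>j<Suc n. g (p ! j))
      = (\<Sum>(p, i)\<in>{p. set p \<subseteq> S \<and> length p = n} \<times> S. \<Prod>j<Suc n. g ((i # p) ! j))"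
    unfolding lists_length_Suc_eq
    by (subst sum.reindex[OF inj]) (auto intro!: sum.cong simp: case_prod_beta)
  also have "\<dots> = (\<Sum>(p, i)\<in>{p. set p \<subseteq> S \<and> length p = n} \<times> S. (\<Prod>j<n. g (p ! j)) * g i)"
    by (intro sum.cong refl) (auto simp: prod.lessThan_Suc_shift mult.commute
          simp del: prod.lessThan_Suc)
  also have "\<dots> = (\<Sum>p\<in>{p. set p \<subseteq> S \<and> length p = n}. \<Prod>j<n. g (p ! j)) * (\<Sum>i\<in>S. g i)"
    by (simp add: sum_product sum.cartesian_product case_prod_beta)
  finally show ?case using Suc by (simp add: mult.commute)
qed

context
  fixes a :: "'a list \<Rightarrow> real" and s :: "'a \<Rightarrow> real" and D :: "'a set"
    and n :: nat and B T :: real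
  assumes row: "\<And>p S. set p \<subseteq> D \<Longrightarrow> length p = n \<Longrightarrow> finite S \<Longrightarrow> S \<subseteq> D \<Longrightarrow>
      (\<Sum>i\<in>S. (a (p @ [i]))\<^sup>2) \<le> B"
    and trace: "\<And>S. finite S \<Longrightarrow> S \<subseteq> D \<Longrightarrow> sum s S \<le> T"
    and s_nonneg: "\<And>i. i \<in> D \<Longrightarrow> 0 \<le> s i"
    and D_nonempty: "D \<noteq> {}"
begin

lemma weighted_sq_tuple_nonneg:
  assumes "set p \<subseteq> D" "n \<le> length p"
  shows "0 \<le> (a p)\<^sup>2 * (\<Prod>j<n. s (p ! j))"
  using assms by (auto intro!: mult_nonneg_nonneg prod_nonneg s_nonneg)

lemma sum_weighted_sq_tuples_le:
  assumes F: "finite F" "F \<subseteq> {p. set p \<subseteq> D \<and> length p = Suc n}"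
  shows "(\<Sum>p\<in>F. (a p)\<^sup>2 * (\<Prod>j<n. s (p ! j))) \<le> B * T ^ n"
proof -
  obtain d where "d \<in> D" using D_nonempty by blast
  then have B_nonneg: "0 \<le> B" using row[of "replicate n d" "{}"] by (auto simp: set_replicate_conv_if)
  define S where "S = \<Union> (set ` F)"
  have S: "finite S" "S \<subseteq> D" using F by (auto simp: S_def)
  define L where "L = {p. set p \<subseteq> S \<and> length p = n}"
  have "finite L" using finite_lists_length_eq[OF \<open>finite S\<close>] by (simp add: L_def)
  have F_sub: "F \<subseteq> (\<lambda>(p, i). p @ [i]) ` (L \<times> S)"
  proof
    fix q assume q: "q \<in> F"
    then have "q \<noteq> []" "length (butlast q) = n" using F by auto
    then have "q = butlast q @ [last q]" "butlast q \<in> L" "last q \<in> S"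
      using q by (auto simp: L_def S_def dest: in_set_butlastD intro!: last_in_set)
    then show "q \<in> (\<lambda>(p, i). p @ [i]) ` (L \<times> S)" by force
  qed
  have inj: "inj_on (\<lambda>(p, i). p @ [i]) (L \<times> S)" by (auto simp: inj_on_def)
  have prod_append: "(\<Prod>j<n. s ((p @ [i]) ! j)) = (\<Prod>j<n. s (p ! j))" if "p \<in> L" for p i
    using that by (auto simp: L_def nth_append intro!: prod.cong)
  have "(\<Sum>p\<in>F. (a p)\<^sup>2 * (\<Prod>j<n. s (p ! j)))
      \<le> (\<Sum>p\<in>(\<lambda>(p, i). p @ [i]) ` (L \<times> S). (a p)\<^sup>2 * (\<Prod>j<n. s (p ! j)))"
    using F_sub S \<open>finite L\<close> unfolding L_def
    by (intro sum_mono2 weighted_sq_tuple_nonneg) (auto simp: subset_iff)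
  also have "\<dots> = (\<Sum>p\<in>L. (\<Prod>j<n. s (p ! j)) * (\<Sum>i\<in>S. (a (p @ [i]))\<^sup>2))"
    unfolding sum.reindex[OF inj] sum_distrib_left sum.cartesian_product
    by (auto intro!: sum.cong simp: prod_append mult.commute)
  also have "\<dots> \<le> (\<Sum>p\<in>L. (\<Prod>j<n. s (p ! j)) * B)"
    using S by (intro sum_mono mult_left_mono row prod_nonneg s_nonneg) (auto simp: L_def dest!: nth_mem)
  also have "\<dots> = B * sum s S ^ n"
    by (simp add: sum_distrib_left[symmetric] L_def sum_prod_nth_lists_length_eq[OF \<open>finite S\<close>]
          mult.commute)
  also have "\<dots> \<le> B * T ^ n"
    using S B_nonneg by (intro mult_left_mono power_mono trace sum_nonneg s_nonneg) auto
  finally show ?thesis .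
qed

lemma weighted_sq_tuples_summable_on:
  "(\<lambda>p. (a p)\<^sup>2 * (\<Prod>j<n. s (p ! j))) summable_on {p. set p \<subseteq> D \<and> length p = Suc n}"
  using sum_weighted_sq_tuples_le
  by (intro nonneg_bdd_above_summable_on weighted_sq_tuple_nonneg bdd_aboveI2) auto

lemma infsum_weighted_sq_tuples_le:
  "(\<Sum>\<^sub>\<infinity>p\<in>{p. set p \<subseteq> D \<and> length p = Suc n}. (a p)\<^sup>2 * (\<Prod>j<n. s (p ! j))) \<le> B * T ^ n"
  by (intro infsum_le_finite_sums weighted_sq_tuples_summable_on sum_weighted_sq_tuples_le)

end

lemma abs_Bform_le_Bnorm:
  assumes "Bbounded a k" and unit: "\<And>j. j < k \<Longrightarrow> xs j \<in> fsv \<and> l2norm (xs j) = 1"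
  shows "\<bar>Bform a k xs\<bar> \<le> Bnorm a k"
proof -
  obtain C where C: "\<And>ys. (\<forall>j<k. ys j \<in> fsv) \<Longrightarrow> \<bar>Bform a k ys\<bar> \<le> C * (\<Prod>j<k. l2norm (ys j))"
    using assms(1) unfolding Bbounded_def by blast
  have "\<bar>Bform a k ys\<bar> \<le> C" if "\<forall>j<k. ys j \<in> fsv \<and> l2norm (ys j) = 1" for ys
  proof -
    have "(\<Prod>j<k. l2norm (ys j)) = 1" using that by (intro prod.neutral) auto
    then show ?thesis using C[of ys] that by simp
  qed
  then have "bdd_above {\<bar>Bform a k ys\<bar> | ys. \<forall>j<k. ys j \<in> fsv \<and> l2norm (ys j) = 1}"
    by (intro bdd_aboveI[where M = C]) auto
  then show ?thesis
    unfolding Bnorm_def using unit by (intro cSup_upper) blast+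
qed

lemma Bform_coordinate_vectors_last:
  assumes "length p = n"
  shows "Bform a (Suc n) (\<lambda>j. if j < n then (\<lambda>i. of_bool (i = p ! j)) else v)
      = (\<Sum>i | v i \<noteq> 0. a (p @ [i]) * v i)"
proof -
  let ?xs = "\<lambda>j. if j < n then (\<lambda>i. of_bool (i = p ! j)) else v"
  have "{q. length q = Suc n \<and> (\<forall>j<Suc n. ?xs j (q ! j) \<noteq> 0)} = (\<lambda>i. p @ [i]) ` {i. v i \<noteq> 0}"
  proof safe
    fix q assume q: "length q = Suc n" "\<forall>j<Suc n. ?xs j (q ! j) \<noteq> 0"
    have "q = p @ [q ! n]"
    proof (rule nth_equalityI)
      fix j assume "j < length q"
      then show "q ! j = (p @ [q ! n]) ! j"
        using q assms by (cases "j < n") (auto simp: nth_append less_Suc_eq split: if_splits)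
    qed (use q assms in simp)
    moreover have "v (q ! n) \<noteq> 0" using q(2) by auto
    ultimately show "q \<in> (\<lambda>i. p @ [i]) ` {i. v i \<noteq> 0}" by blast
  qed (use assms in \<open>auto simp: nth_append less_Suc_eq\<close>)
  then show ?thesis
    unfolding Bform_def using assms
    by (simp add: sum.reindex inj_on_def nth_append)
qed

lemma sum_row_sq_le_Bnorm_sq:
  assumes "Bbounded a (Suc n)" "length p = n" "0 \<notin> set p" "finite S" "0 \<notin> S"
  shows "(\<Sum>i\<in>S. (a (p @ [i]))\<^sup>2) \<le> (Bnorm a (Suc n))\<^sup>2"
proof -
  define A where "A = (\<Sum>i\<in>S. (a (p @ [i]))\<^sup>2)"
  have "0 \<le> A" by (simp add: A_def sum_nonneg)
  show ?thesis
  proof (cases "A = 0")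
    case False
    with \<open>0 \<le> A\<close> have "0 < A" by simp
    define v where "v i = (if i \<in> S then a (p @ [i]) / sqrt A else 0)" for i
    define xs where "xs j = (if j < n then (\<lambda>i. of_bool (i = p ! j)) else v)" for j
    have supp_v: "{i. v i \<noteq> 0} = {i \<in> S. a (p @ [i]) \<noteq> 0}"
      using \<open>0 < A\<close> by (auto simp: v_def)
    have A_supp: "A = (\<Sum>i | v i \<noteq> 0. (a (p @ [i]))\<^sup>2)"
      unfolding A_def supp_v by (rule sum.mono_neutral_right) (use assms in auto)
    have "Bform a (Suc n) xs = (\<Sum>i | v i \<noteq> 0. (a (p @ [i]))\<^sup>2 / sqrt A)"
      unfolding xs_def Bform_coordinate_vectors_last[OF assms(2)]
      by (intro sum.cong refl) (auto simp: v_def power2_eq_square)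
    also have "\<dots> = sqrt A"
      using \<open>0 < A\<close> by (simp add: A_supp[symmetric] sum_divide_distrib[symmetric] real_div_sqrt)
    finally have Bform_xs: "Bform a (Suc n) xs = sqrt A" .
    have "l2norm v = sqrt (\<Sum>i | v i \<noteq> 0. (a (p @ [i]))\<^sup>2 / A)"
      unfolding l2norm_def using \<open>0 < A\<close>
      by (intro arg_cong[where f = sqrt] sum.cong refl) (auto simp: v_def power_divide)
    also have "\<dots> = 1"
      using \<open>0 < A\<close> by (simp add: A_supp[symmetric] sum_divide_distrib[symmetric])
    finally have "l2norm v = 1" .
    moreover have "finite {i. v i \<noteq> 0}" "v 0 = 0" using assms by (auto simp: supp_v v_def)
    moreover have "p ! j \<noteq> 0" if "j < n" for j using assms(2,3) that by (metis nth_mem)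
    moreover have "{i. of_bool (i = c) \<noteq> (0::real)} = {c}" for c by auto
    ultimately have "xs j \<in> fsv \<and> l2norm (xs j) = 1" if "j < Suc n" for j
      using that by (auto simp: xs_def fsv_def l2norm_def)
    then have "sqrt A \<le> Bnorm a (Suc n)"
      using abs_Bform_le_Bnorm[OF assms(1), of xs] Bform_xs by simp
    then show ?thesis unfolding A_def by (rule sqrt_le_D)
  qed (simp add: A_def)
qed

lemma summable_cnj_mult_l2H:
  assumes "x \<in> l2H" "y \<in> l2H"
  shows "summable (\<lambda>n. cnj (x n) * y n)"
proof (rule summable_comparison_test)
  show "summable (\<lambda>n. (cmod (x n))\<^sup>2 + (cmod (y n))\<^sup>2)"
    using assms by (intro summable_add) (auto simp: l2H_def)
  have "cmod (x n) * cmod (y n) \<le> (cmod (x n))\<^sup>2 + (cmod (y n))\<^sup>2" for n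
    using sum_squares_bound[of "cmod (x n)" "cmod (y n)"]
      mult_nonneg_nonneg[OF norm_ge_zero norm_ge_zero, of "x n" "y n"] by linarith
  then show "\<exists>N. \<forall>n\<ge>N. norm (cnj (x n) * y n) \<le> (cmod (x n))\<^sup>2 + (cmod (y n))\<^sup>2"
    by (simp add: norm_mult)
qed

lemma hnorm_power2: "x \<in> l2H \<Longrightarrow> (hnorm x)\<^sup>2 = (\<Sum>n. (cmod (x n))\<^sup>2)"
  unfolding hnorm_def l2H_def by (simp add: suminf_nonneg)

lemma hinner_self_eq_hnorm_power2:
  assumes "x \<in> l2H"
  shows "hinner x x = complex_of_real ((hnorm x)\<^sup>2)"
proof -
  have "(\<lambda>n. cnj (x n) * x n) = (\<lambda>n. complex_of_real ((cmod (x n))\<^sup>2))"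
    by (intro ext) (metis complex_norm_square mult.commute)
  then show ?thesis
    using assms unfolding hinner_def hnorm_power2[OF assms] l2H_def by (simp add: suminf_of_real)
qed

lemma hinner_hscale_left:
  assumes "x \<in> l2H" "y \<in> l2H"
  shows "hinner (hscale c x) y = cnj c * hinner x y"
  unfolding hinner_def hscale_def
  using suminf_mult[OF summable_cnj_mult_l2H[OF assms], of "cnj c"] by (simp add: ac_simps)

lemma hinner_indicator_left: "hinner (\<lambda>m. of_bool (m = n)) x = x n"
proof -
  have "(\<lambda>m. cnj (of_bool (m = n)) * x m) = (\<lambda>m. if m = n then x m else 0)" by auto
  then show ?thesis unfolding hinner_def using sums_single[of n x] by (simp add: sums_iff)
qed

lemma indicator_in_l2H: "(\<lambda>m. of_bool (m = n)) \<in> l2H"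
proof -
  have "(\<lambda>m. (cmod (of_bool (m = n) :: complex))\<^sup>2) = (\<lambda>m. if m = n then 1 else 0)" by auto
  then show ?thesis unfolding l2H_def using sums_single[of n "\<lambda>_. 1::real"] by (simp add: sums_iff)
qed

lemma sum_cnj_mult_self_sub_lincomb:
  "(\<Sum>n\<in>N. cnj (x n - (\<Sum>j\<in>J. c j * e j n)) * (x n - (\<Sum>j\<in>J. c j * e j n)))
    = (\<Sum>n\<in>N. cnj (x n) * x n)
      - (\<Sum>j\<in>J. c j * cnj (\<Sum>n\<in>N. cnj (e j n) * x n))
      - (\<Sum>j\<in>J. cnj (c j) * (\<Sum>n\<in>N. cnj (e j n) * x n))
      + (\<Sum>j\<in>J. \<Sum>i\<in>J. cnj (c j) * c i * (\<Sum>n\<in>N. cnj (e j n) * e i n))"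
proof -
  have pointwise: "cnj (x n - (\<Sum>j\<in>J. c j * e j n)) * (x n - (\<Sum>j\<in>J. c j * e j n))
      = cnj (x n) * x n - (\<Sum>j\<in>J. c j * cnj (cnj (e j n) * x n))
        - (\<Sum>j\<in>J. cnj (c j) * (cnj (e j n) * x n))
        + (\<Sum>j\<in>J. \<Sum>i\<in>J. cnj (c j) * c i * (cnj (e j n) * e i n))" for n
    by (simp add: algebra_simps cnj_sum sum_distrib_left sum_distrib_right sum_product
          sum_subtractf[symmetric])
  show ?thesis
    unfolding pointwise sum.distrib sum_subtractf cnj_sum sum_distrib_left
    by (simp add: sum.swap[of _ N] sum.swap[of _ N J])
qed

lemma bessel_inequality:
  assumes x: "x \<in> l2H" and "finite J" and e: "\<And>j. j \<in> J \<Longrightarrow> e j \<in> l2H"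
    and orth: "\<And>i j. i \<in> J \<Longrightarrow> j \<in> J \<Longrightarrow> hinner (e j) (e i) = (if j = i then 1 else 0)"
  shows "(\<Sum>j\<in>J. (cmod (hinner (e j) x))\<^sup>2) \<le> (hnorm x)\<^sup>2"
proof -
  define c where "c j = hinner (e j) x" for j
  let ?Q = "\<lambda>M. \<Sum>n<M. cnj (x n - (\<Sum>j\<in>J. c j * e j n)) * (x n - (\<Sum>j\<in>J. c j * e j n))"
  have partial: "(\<lambda>M. \<Sum>n<M. cnj (u n) * v n) \<longlonglongrightarrow> hinner u v" if "u \<in> l2H" "v \<in> l2H" for u v
    unfolding hinner_def using summable_cnj_mult_l2H[OF that] by (rule summable_LIMSEQ)
  have "?Q \<longlonglongrightarrow> hinner x x - (\<Sum>j\<in>J. c j * cnj (c j)) - (\<Sum>j\<in>J. cnj (c j) * c j)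
      + (\<Sum>j\<in>J. \<Sum>i\<in>J. cnj (c j) * c i * hinner (e j) (e i))"
    unfolding sum_cnj_mult_self_sub_lincomb c_def
    by (intro tendsto_intros partial x e)
  moreover have "hinner x x - (\<Sum>j\<in>J. c j * cnj (c j)) - (\<Sum>j\<in>J. cnj (c j) * c j)
      + (\<Sum>j\<in>J. \<Sum>i\<in>J. cnj (c j) * c i * hinner (e j) (e i))
      = complex_of_real ((hnorm x)\<^sup>2 - (\<Sum>j\<in>J. (cmod (c j))\<^sup>2))"
  proof -
    have "c j * cnj (c j) = complex_of_real ((cmod (c j))\<^sup>2)"
      "cnj (c j) * c j = complex_of_real ((cmod (c j))\<^sup>2)" for j
      by (simp_all only: complex_norm_square mult.commute)
    then show ?thesis
      using \<open>finite J\<close>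
      by (simp add: orth hinner_self_eq_hnorm_power2[OF x] if_distrib cong: if_cong)
  qed
  ultimately have "?Q \<longlonglongrightarrow> complex_of_real ((hnorm x)\<^sup>2 - (\<Sum>j\<in>J. (cmod (c j))\<^sup>2))"
    by simp
  then have "(\<lambda>M. Re (?Q M)) \<longlonglongrightarrow> (hnorm x)\<^sup>2 - (\<Sum>j\<in>J. (cmod (c j))\<^sup>2)"
    by (auto dest: tendsto_Re)
  moreover have "0 \<le> Re (?Q M)" for M
  proof -
    have "0 \<le> Re (cnj z * z)" for z :: complex
      by (metis complex_norm_square mult.commute Re_complex_of_real zero_le_power2)
    then show ?thesis unfolding Re_sum by (intro sum_nonneg)
  qed
  ultimately have "0 \<le> (hnorm x)\<^sup>2 - (\<Sum>j\<in>J. (cmod (c j))\<^sup>2)"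
    by (intro LIMSEQ_le_const) auto
  then show ?thesis by (simp add: c_def)
qed

lemma space_circle_measure: "space circle_measure = sphere 0 1"
  unfolding circle_measure_def by simp

lemma prob_space_circle_measure: "prob_space circle_measure"
proof -
  have uniform: "prob_space (uniform_measure lborel {0..<2*pi})"
    by (intro prob_space_uniform_measure) auto
  have "cis \<in> borel_measurable (uniform_measure lborel {0..<2*pi})"
    using borel_measurable_continuous_onI[OF continuous_on_cis[OF continuous_on_id]]
    by (simp cong: measurable_cong_sets)
  then have "cis \<in> uniform_measure lborel {0..<2*pi} \<rightarrow>\<^sub>M restrict_space borel (sphere 0 1)"
    by (intro measurable_restrict_space2) auto
  then show ?thesis
    unfolding circle_measure_def by (rule prob_space.prob_space_distr[OF uniform])
qed

lemma two_sigma_sq_eq_integral: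
  assumes R: "is_R_of E R" and eb: "is_eigenbasis R e \<sigma>" and "1 \<le> j"
  shows "2 * (\<sigma> j)\<^sup>2 = (\<integral>l. (cmod (hinner (e j) (E l)))\<^sup>2 \<partial>circle_measure)"
proof -
  have ej: "e j \<in> l2H" "hinner (e j) (e j) = 1"
    "R (e j) = hscale (complex_of_real (2 * (\<sigma> j)\<^sup>2)) (e j)"
    using eb \<open>1 \<le> j\<close> unfolding is_eigenbasis_def by auto
  have "complex_of_real (2 * (\<sigma> j)\<^sup>2) = hinner (R (e j)) (e j)"
    by (simp add: ej(3) hinner_hscale_left[OF ej(1,1)] ej(2))
  also have "\<dots> = (\<integral>l. hinner (e j) (E l) * cnj (hinner (e j) (E l)) \<partial>circle_measure)"
    using R ej(1) unfolding is_R_of_def by blast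
  also have "\<dots> = complex_of_real (\<integral>l. (cmod (hinner (e j) (E l)))\<^sup>2 \<partial>circle_measure)"
    unfolding complex_norm_square[symmetric] by (rule integral_complex_of_real)
  finally show ?thesis by (simp only: of_real_eq_iff)
qed

lemma spanning_field_bounded:
  assumes "spanning_field T E"
  obtains M where "\<And>l. l \<in> space circle_measure \<Longrightarrow> E l \<in> l2H \<and> (hnorm (E l))\<^sup>2 \<le> M"
proof -
  obtain M where M: "\<And>l. l \<in> sphere 0 1 \<Longrightarrow> E l \<in> l2H \<and> hnorm (E l) \<le> M"
    using assms unfolding spanning_field_def by blast
  have "0 \<le> hnorm x" if "x \<in> l2H" for x
    using that unfolding hnorm_def l2H_def by (simp add: suminf_nonneg)
  then have "E l \<in> l2H \<and> (hnorm (E l))\<^sup>2 \<le> M\<^sup>2" if "l \<in> sphere 0 1" for l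
    using M[OF that] by (auto intro: power_mono)
  then show ?thesis using that by (auto simp: space_circle_measure)
qed

lemma integrable_hnorm_field_sq:
  assumes "spanning_field T E"
  shows "integrable circle_measure (\<lambda>l. (hnorm (E l))\<^sup>2)"
proof -
  interpret prob_space circle_measure by (rule prob_space_circle_measure)
  obtain M where M: "\<And>l. l \<in> space circle_measure \<Longrightarrow> E l \<in> l2H \<and> (hnorm (E l))\<^sup>2 \<le> M"
    using spanning_field_bounded[OF assms] by blast
  have "(\<lambda>l. hinner (\<lambda>m. of_bool (m = n)) (E l)) \<in> borel_measurable circle_measure" for n
    using assms indicator_in_l2H unfolding spanning_field_def by blast
  then have "(\<lambda>l. \<Sum>n. (cmod (E l n))\<^sup>2) \<in> borel_measurable circle_measure"
    unfolding hinner_indicator_left by (intro borel_measurable_suminf) measurable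
  then have "(\<lambda>l. (hnorm (E l))\<^sup>2) \<in> borel_measurable circle_measure"
    by (rule measurable_cong[THEN iffD1, rotated]) (simp add: hnorm_power2 M)
  then show ?thesis
    using M by (intro integrable_const_bound[where B = M] AE_I2) auto
qed

lemma integrable_cmod_hinner_field_sq:
  assumes "spanning_field T E" "x \<in> l2H" "hinner x x = 1"
  shows "integrable circle_measure (\<lambda>l. (cmod (hinner x (E l)))\<^sup>2)"
proof -
  interpret prob_space circle_measure by (rule prob_space_circle_measure)
  obtain M where M: "\<And>l. l \<in> space circle_measure \<Longrightarrow> E l \<in> l2H \<and> (hnorm (E l))\<^sup>2 \<le> M"
    using spanning_field_bounded[OF assms(1)] by blast
  have "(cmod (hinner x (E l)))\<^sup>2 \<le> M" if "l \<in> space circle_measure" for l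
  proof -
    have "(cmod (hinner x (E l)))\<^sup>2 \<le> (hnorm (E l))\<^sup>2"
      using bessel_inequality[of "E l" "{0::nat}" "\<lambda>_. x"] M[OF that] assms(2,3) by force
    then show ?thesis using M[OF that] by linarith
  qed
  moreover have "(\<lambda>l. hinner x (E l)) \<in> borel_measurable circle_measure"
    using assms unfolding spanning_field_def by blast
  ultimately show ?thesis
    by (intro integrable_const_bound[where B = M] AE_I2) auto
qed

lemma sum_two_sigma_sq_le_E_L2norm_sq:
  assumes sf: "spanning_field T E" and R: "is_R_of E R" and eb: "is_eigenbasis R e \<sigma>"
  shows "(\<Sum>j\<in>{1..N}. 2 * (\<sigma> j)\<^sup>2) \<le> E_L2norm_sq E"
proof -
  have e: "e j \<in> l2H" "hinner (e j) (e j) = 1" if "1 \<le> j" for j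
    using eb that unfolding is_eigenbasis_def by auto
  obtain M where M: "\<And>l. l \<in> space circle_measure \<Longrightarrow> E l \<in> l2H \<and> (hnorm (E l))\<^sup>2 \<le> M"
    using spanning_field_bounded[OF sf] by blast
  have "(\<Sum>j\<in>{1..N}. 2 * (\<sigma> j)\<^sup>2)
      = (\<Sum>j\<in>{1..N}. \<integral>l. (cmod (hinner (e j) (E l)))\<^sup>2 \<partial>circle_measure)"
    by (intro sum.cong refl two_sigma_sq_eq_integral[OF R eb]) auto
  also have "\<dots> = (\<integral>l. (\<Sum>j\<in>{1..N}. (cmod (hinner (e j) (E l)))\<^sup>2) \<partial>circle_measure)"
    using e by (intro Bochner_Integration.integral_sum[symmetric]
        integrable_cmod_hinner_field_sq[OF sf]) auto
  also have "\<dots> \<le> (\<integral>l. (hnorm (E l))\<^sup>2 \<partial>circle_measure)"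
    using eb M unfolding is_eigenbasis_def
    by (intro integral_mono' integrable_hnorm_field_sq[OF sf] bessel_inequality) auto
  finally show ?thesis unfolding E_L2norm_sq_def .
qed

lemma sum_sigZ_sq_le_E_L2norm_sq:
  assumes "spanning_field T E" "is_R_of E R" "is_eigenbasis R e \<sigma>" "finite S" "0 \<notin> S"
  shows "(\<Sum>i\<in>S. (sigZ \<sigma> i)\<^sup>2) \<le> E_L2norm_sq E"
proof -
  define N where "N = Max (insert 0 ((\<lambda>i. nat \<bar>i\<bar>) ` S))"
  have "nat \<bar>i\<bar> \<in> {1..N}" if "i \<in> S" for i
  proof -
    have "i \<noteq> 0" using that assms(5) by blast
    then show ?thesis using that assms(4) unfolding N_def by (auto intro!: Max_ge)
  qed
  then have S_sub: "S \<subseteq> int ` {1..N} \<union> uminus ` int ` {1..N}"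
    by (force simp: image_iff abs_if)
  have "(\<Sum>i\<in>S. (sigZ \<sigma> i)\<^sup>2) \<le> (\<Sum>i\<in>int ` {1..N} \<union> uminus ` int ` {1..N}. (sigZ \<sigma> i)\<^sup>2)"
    by (intro sum_mono2 S_sub) auto
  also have "\<dots> = (\<Sum>j\<in>{1..N}. 2 * (\<sigma> j)\<^sup>2)"
    by (subst sum.union_disjoint) (auto simp: sum.reindex inj_on_def sigZ_def sum.distrib[symmetric])
  also have "\<dots> \<le> E_L2norm_sq E"
    using assms(1-3) by (rule sum_two_sigma_sq_le_E_L2norm_sq)
  finally show ?thesis .
qed

theorem corollary5p13:
  fixes T :: "hvec \<Rightarrow> hvec" and E :: "complex \<Rightarrow> hvec" and R :: "hvec \<Rightarrow> hvec"
    and e :: "nat \<Rightarrow> hvec" and \<sigma> :: "nat \<Rightarrow> real" and m :: "hvec measure"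
    and f :: "hvec \<Rightarrow> real" and k :: nat
  assumes "bounded_op T"
    and "spanning_field T E"
    and "is_R_of E R"
    and "is_eigenbasis R e \<sigma>"
    and "gaussian_cov m R"
    and "f \<in> L2R m"
    and "k > 0"
    and "Bbounded (alpha m e \<sigma> f k) k"
  shows "(\<lambda>is. (alpha m e \<sigma> f k is)\<^sup>2 * (\<Prod>j<k-1. (sigZ \<sigma> (is ! j))\<^sup>2)) summable_on Zstar_tuples k
    \<and> (\<Sum>\<^sub>\<infinity>is\<in>Zstar_tuples k. (alpha m e \<sigma> f k is)\<^sup>2 * (\<Prod>j<k-1. (sigZ \<sigma> (is ! j))\<^sup>2))
        \<le> (Bnorm (alpha m e \<sigma> f k) k)\<^sup>2 * (E_L2norm_sq E) ^ (k - 1)"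
proof -
  obtain n where k: "k = Suc n" using \<open>k > 0\<close> by (cases k) auto
  let ?a = "alpha m e \<sigma> f k" and ?s = "\<lambda>i. (sigZ \<sigma> i)\<^sup>2"
  have row: "(\<Sum>i\<in>S. (?a (p @ [i]))\<^sup>2) \<le> (Bnorm ?a k)\<^sup>2"
    if "set p \<subseteq> -{0}" "length p = n" "finite S" "S \<subseteq> -{0}" for p S
    using sum_row_sq_le_Bnorm_sq[of ?a n p S] assms(8) that unfolding k by blast
  have trace: "sum ?s S \<le> E_L2norm_sq E" if "finite S" "S \<subseteq> -{0}" for S
    using sum_sigZ_sq_le_E_L2norm_sq assms(2-4) that by blast
  have "(1::int) \<in> -{0}" by simp
  then have "-{0::int} \<noteq> {}" by blast
  note tuple_bounds = weighted_sq_tuples_summable_on[OF row trace zero_le_power2 this]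
    infsum_weighted_sq_tuples_le[OF row trace zero_le_power2 this]
  have "Zstar_tuples k = {p. set p \<subseteq> -{0} \<and> length p = Suc n}"
    by (auto simp: Zstar_tuples_def k)
  then show ?thesis using tuple_bounds by (simp add: k)
qed

end
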